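(* Let $k\ge 2$ be an integer, $1/2<q<1$. Let $y^*$ be a point with all coordinates strictly positive at which $P$ attains its maximum over $\Delta_k$, and suppose $y^*\neq(1/k,\dots,1/k)$. Then the coordinates of $y^*$ take exactly two distinct values $a$ and $b$, with $a<1-q<b$.
   Context: $\Delta_k=\{y\in\mathbb R^k: y_i\ge 0,\ \sum_i y_i=1\}$. For $y\in\Delta_k$, $P(y)=\sum_{i=1}^k y_i^q\prod_{j\ne i}(1-y_j)^q$. *)

theory Defs
  imports "HOL-Analysis.Analysis"
begin

text \<open>Points of R^k are represented as functions nat => real; only the
coordinates 0..k-1 are relevant.\<close>

definition prob_simplex :: "nat \<Rightarrow> (nat \<Rightarrow> real) set" where
  "prob_simplex k = {y. (\<forall>i<k. 0 \<le> y i) \<and> (\<Sum>i<k. y i) = 1}"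

definition Pfun :: "nat \<Rightarrow> real \<Rightarrow> (nat \<Rightarrow> real) \<Rightarrow> real" where
  "Pfun k q y = (\<Sum>i<k. y i powr q * (\<Prod>j\<in>{..<k} - {i}. (1 - y j) powr q))"

end

theory Submission
  imports Defs
begin

text \<open>
  Write \<open>\<rho>(v) = (v / (1 - v))\<^sup>q\<close>, so that on the open simplex
  \<open>P(y) = \<Prod>\<^sub>m (1 - y\<^sub>m)\<^sup>q \<cdot> S\<close> with \<open>S = \<Sum>\<^sub>l \<rho>(y\<^sub>l)\<close>.
  Shifting mass between two coordinates of an interior maximiser and differentiating
  gives the first-order condition that \<open>(\<rho>(y\<^sub>i) / y\<^sub>i - S) / (1 - y\<^sub>i)\<close> does not depend
  on \<open>i\<close>; since \<open>\<Sum>\<^sub>i y\<^sub>i \<cdot> \<rho>(y\<^sub>i) / y\<^sub>i = S\<close>, this common value is \<open>0\<close>, i.e.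
  \<open>\<rho>(y\<^sub>i) / y\<^sub>i = S\<close> for all \<open>i\<close>. Now \<open>\<psi> = ln (\<rho>(v) / v)\<close> has derivative
  \<open>(v - (1 - q)) / (v (1 - v))\<close>, so it is strictly decreasing on \<open>(0, 1 - q]\<close> and
  strictly increasing on \<open>[1 - q, 1)\<close>: a level set of \<open>\<psi>\<close> has at most one point on
  each side of \<open>1 - q\<close>.
\<close>

lemma (in comm_monoid_set) remove2:
  assumes "finite A" "a \<in> A" "b \<in> A" "a \<noteq> b"
  shows "F g A = g a \<^bold>* g b \<^bold>* F g (A - {a, b})"
proof -
  have "F g A = g a \<^bold>* F g (A - {a})"
    using assms by (simp add: remove)
  also have "F g (A - {a}) = g b \<^bold>* F g (A - {a} - {b})"
    using assms by (simp add: remove)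
  finally show ?thesis
    by (simp add: assoc Diff_insert2[symmetric])
qed

definition odds_powr :: "real \<Rightarrow> real \<Rightarrow> real" where
  "odds_powr q v = (v / (1 - v)) powr q"

definition psi :: "real \<Rightarrow> real \<Rightarrow> real" where
  "psi q v = (q - 1) * ln v - q * ln (1 - v)"

lemma odds_powr_has_real_derivative [derivative_intros]:
  assumes "(f has_real_derivative f') (at x within s)" "0 < f x" "f x < 1"
  shows "((\<lambda>x. odds_powr q (f x)) has_real_derivative
           q * odds_powr q (f x) / (f x * (1 - f x)) * f') (at x within s)"
proof -
  have powr_diff_one: "(f x / (1 - f x)) powr (q - 1) = (f x / (1 - f x)) powr q * ((1 - f x) / f x)"
    using assms by (simp add: powr_diff)
  show ?thesis
    using assms unfolding odds_powr_def
    by (auto intro!: derivative_eq_intros simp: powr_diff_one)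
      (simp add: divide_simps power2_eq_square algebra_simps)
qed

lemma odds_powr_eq_exp_psi:
  assumes "0 < v" "v < 1"
  shows "odds_powr q v = v * exp (psi q v)"
  using assms unfolding odds_powr_def psi_def
  by (simp add: powr_def exp_diff exp_add ln_div algebra_simps)

lemma psi_has_real_derivative:
  assumes "0 < v" "v < 1"
  shows "(psi q has_real_derivative (v - (1 - q)) / (v * (1 - v))) (at v)"
proof -
  have "(psi q has_real_derivative (q - 1) * (1 / v) - q * (- 1 / (1 - v))) (at v)"
    unfolding psi_def using assms by (auto intro!: derivative_eq_intros)
  then show ?thesis
    using assms by (simp add: field_simps)
qed

lemma psi_strict_decreasing:
  assumes "0 < q" "0 < u" "u < v" "v \<le> 1 - q"
  shows "psi q v < psi q u"
proof (rule DERIV_neg_imp_decreasing_open[OF \<open>u < v\<close>])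
  fix x assume "u < x" "x < v"
  with assms show "\<exists>D. (psi q has_real_derivative D) (at x) \<and> D < 0"
    by (intro exI[of _ "(x - (1 - q)) / (x * (1 - x))"] conjI psi_has_real_derivative
        divide_neg_pos mult_pos_pos) auto
next
  show "continuous_on {u..v} (psi q)"
    using assms unfolding psi_def by (intro continuous_intros) auto
qed

lemma psi_strict_increasing:
  assumes "q < 1" "1 - q \<le> u" "u < v" "v < 1"
  shows "psi q u < psi q v"
proof (rule DERIV_pos_imp_increasing_open[OF \<open>u < v\<close>])
  fix x assume "u < x" "x < v"
  with assms show "\<exists>D. (psi q has_real_derivative D) (at x) \<and> D > 0"
    by (intro exI[of _ "(x - (1 - q)) / (x * (1 - x))"] conjI psi_has_real_derivative
        divide_pos_pos mult_pos_pos) auto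
next
  show "continuous_on {u..v} (psi q)"
    using assms unfolding psi_def by (intro continuous_intros) auto
qed

lemma psi_eq_imp_eq_same_side:
  assumes "0 < q" "q < 1" "0 < u" "u < 1" "0 < v" "v < 1" "psi q u = psi q v"
    and "u \<le> 1 - q \<and> v \<le> 1 - q \<or> 1 - q \<le> u \<and> 1 - q \<le> v"
  shows "u = v"
  using assms psi_strict_decreasing[of q u v] psi_strict_decreasing[of q v u]
    psi_strict_increasing[of q u v] psi_strict_increasing[of q v u]
  by (cases u v rule: linorder_cases) auto

lemma psi_level_set_eq_two_points:
  assumes "0 < q" "q < 1" "V \<subseteq> {0<..<1}" "\<forall>u\<in>V. \<forall>v\<in>V. psi q u = psi q v"
    and "u \<in> V" "v \<in> V" "u \<noteq> v"
  shows "\<exists>a b. a < 1 - q \<and> 1 - q < b \<and> V = {a, b}"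
proof -
  have same_side: "w = w'"
    if "w \<in> V" "w' \<in> V" "w \<le> 1 - q \<and> w' \<le> 1 - q \<or> 1 - q \<le> w \<and> 1 - q \<le> w'" for w w'
  proof (rule psi_eq_imp_eq_same_side[OF assms(1,2)])
    show "0 < w" "w < 1" "0 < w'" "w' < 1"
      using that(1,2) assms(3) by auto
    show "psi q w = psi q w'"
      using that(1,2) assms(4) by blast
  qed (use that(3) in blast)
  define a where "a = min u v"
  define b where "b = max u v"
  have "a \<in> V" "b \<in> V" "a < b"
    using assms(5-7) unfolding a_def b_def by (auto simp: min_def max_def)
  have "a < 1 - q"
  proof (rule ccontr)
    assume "\<not> a < 1 - q"
    then show False
      using same_side[OF \<open>a \<in> V\<close> \<open>b \<in> V\<close>] \<open>a < b\<close> by simp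
  qed
  have "1 - q < b"
  proof (rule ccontr)
    assume "\<not> 1 - q < b"
    then show False
      using same_side[OF \<open>a \<in> V\<close> \<open>b \<in> V\<close>] \<open>a < b\<close> by simp
  qed
  have "w = a \<or> w = b" if "w \<in> V" for w
  proof (cases "w \<le> 1 - q")
    case True
    then show ?thesis
      using same_side[OF that \<open>a \<in> V\<close>] \<open>a < 1 - q\<close> by simp
  next
    case False
    then show ?thesis
      using same_side[OF that \<open>b \<in> V\<close>] \<open>1 - q < b\<close> by simp
  qed
  then have "V = {a, b}"
    using \<open>a \<in> V\<close> \<open>b \<in> V\<close> by blast
  then show ?thesis
    using \<open>a < 1 - q\<close> \<open>1 - q < b\<close> by blast
qed

lemma mass_transfer_stationary:
  fixes u w q R d :: real
  defines "g \<equiv> \<lambda>t. (1 - (u + t)) powr q * (1 - (w - t)) powr q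
                    * (odds_powr q (u + t) + odds_powr q (w - t) + R)"
    and "S \<equiv> odds_powr q u + odds_powr q w + R"
  assumes "0 < q" "0 < u" "u < 1" "0 < w" "w < 1" "0 < d"
    and local_max: "\<forall>t. \<bar>t\<bar> < d \<longrightarrow> g t \<le> g 0"
  shows "(odds_powr q u / u - S) / (1 - u) = (odds_powr q w / w - S) / (1 - w)"
proof -
  define D where "D = q * ((1 - u) powr q * (1 - w) powr q)
    * (S / (1 - w) - S / (1 - u) + odds_powr q u / (u * (1 - u)) - odds_powr q w / (w * (1 - w)))"
  have "(g has_real_derivative D) (at 0)"
    unfolding g_def D_def S_def using assms(3-7)
    by (auto intro!: derivative_eq_intros simp: powr_diff algebra_simps add_divide_distrib)
  then have "D = 0"
    using DERIV_local_max[OF _ \<open>0 < d\<close>] local_max by simp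
  then show ?thesis
    unfolding D_def using assms(3-7) by (simp add: diff_divide_distrib)
qed

lemma prob_simplex_coord_less_one:
  assumes "y \<in> prob_simplex k" "i < k" "j < k" "i \<noteq> j" "0 < y j"
  shows "y i < 1"
proof -
  have "(\<Sum>l\<in>{..<k} - {i, j}. y l) \<ge> 0"
    using assms(1) by (intro sum_nonneg) (auto simp: prob_simplex_def)
  moreover have "(\<Sum>l<k. y l) = y i + y j + (\<Sum>l\<in>{..<k} - {i, j}. y l)"
    using assms by (simp add: sum.remove2)
  ultimately show ?thesis
    using assms by (simp add: prob_simplex_def)
qed

lemma prob_simplex_transfer:
  assumes "y \<in> prob_simplex k" "i < k" "j < k" "i \<noteq> j" "- y i \<le> t" "t \<le> y j"
  shows "y(i := y i + t, j := y j - t) \<in> prob_simplex k"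
proof -
  let ?z = "y(i := y i + t, j := y j - t)"
  have "(\<Sum>l<k. ?z l) = ?z i + ?z j + (\<Sum>l\<in>{..<k} - {i, j}. ?z l)"
    using assms by (simp add: sum.remove2)
  also have "\<dots> = y i + y j + (\<Sum>l\<in>{..<k} - {i, j}. y l)"
    using assms by simp
  also have "\<dots> = (\<Sum>l<k. y l)"
    using assms by (simp add: sum.remove2)
  finally show ?thesis
    using assms by (auto simp: prob_simplex_def)
qed

lemma prob_simplex_pos_less_one:
  assumes "y \<in> prob_simplex k" "2 \<le> k" "\<forall>j<k. 0 < y j" "i < k"
  shows "y i < 1"
proof -
  define j :: nat where "j = (if i = 0 then 1 else 0)"
  have "j < k" "j \<noteq> i"
    using assms(2) unfolding j_def by auto
  then show ?thesis
    using prob_simplex_coord_less_one[OF assms(1,4)] assms(3) by simp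
qed

lemma prob_simplex_nonconstant:
  assumes "y \<in> prob_simplex k" "i < k" "y i \<noteq> 1 / real k"
  shows "\<exists>j<k. y j \<noteq> y i"
proof (rule ccontr)
  assume "\<not> (\<exists>j<k. y j \<noteq> y i)"
  then have "(\<Sum>l<k. y l) = real k * y i"
    by simp
  then show False
    using assms by (simp add: prob_simplex_def field_simps)
qed

lemma Pfun_eq_prod_mult_sum_odds_powr:
  assumes "\<forall>m<k. 0 \<le> y m \<and> y m < 1"
  shows "Pfun k q y = (\<Prod>m<k. (1 - y m) powr q) * (\<Sum>l<k. odds_powr q (y l))"
proof -
  have "y l powr q * (\<Prod>m\<in>{..<k} - {l}. (1 - y m) powr q)
          = odds_powr q (y l) * (\<Prod>m<k. (1 - y m) powr q)" if "l < k" for l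
  proof -
    have "y l powr q = odds_powr q (y l) * (1 - y l) powr q"
      using assms that by (auto simp: odds_powr_def powr_divide)
    moreover have "(\<Prod>m<k. (1 - y m) powr q)
                     = (1 - y l) powr q * (\<Prod>m\<in>{..<k} - {l}. (1 - y m) powr q)"
      using that by (simp add: prod.remove)
    ultimately show ?thesis
      by simp
  qed
  then show ?thesis
    unfolding Pfun_def sum_distrib_left by (simp add: mult.commute)
qed

lemma Pfun_split_pair:
  assumes "\<forall>m<k. 0 \<le> y m \<and> y m < 1" "i < k" "j < k" "i \<noteq> j"
  shows "Pfun k q y = (\<Prod>m\<in>{..<k} - {i, j}. (1 - y m) powr q)
           * ((1 - y i) powr q * (1 - y j) powr q
              * (odds_powr q (y i) + odds_powr q (y j)
                 + (\<Sum>l\<in>{..<k} - {i, j}. odds_powr q (y l))))"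
  unfolding Pfun_eq_prod_mult_sum_odds_powr[OF assms(1)]
  using assms(2-4) by (simp add: sum.remove2 prod.remove2)

lemma Pfun_transfer:
  assumes "y \<in> prob_simplex k" "\<forall>m<k. 0 < y m" "i < k" "j < k" "i \<noteq> j"
    and "\<bar>t\<bar> < min (y i) (y j)"
  shows "Pfun k q (y(i := y i + t, j := y j - t))
           = (\<Prod>m\<in>{..<k} - {i, j}. (1 - y m) powr q)
             * ((1 - (y i + t)) powr q * (1 - (y j - t)) powr q
                * (odds_powr q (y i + t) + odds_powr q (y j - t)
                   + (\<Sum>l\<in>{..<k} - {i, j}. odds_powr q (y l))))"
proof -
  let ?z = "y(i := y i + t, j := y j - t)"
  have "?z \<in> prob_simplex k"
    using assms by (intro prob_simplex_transfer) auto
  moreover have "0 < ?z m" if "m < k" for m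
    using that assms(2,6) by auto
  ultimately have "\<forall>m<k. 0 \<le> ?z m \<and> ?z m < 1"
    using assms(3-5) prob_simplex_coord_less_one[of ?z k _ i] prob_simplex_coord_less_one[of ?z k _ j]
    by (metis less_imp_le)
  moreover have "(\<Prod>m\<in>{..<k} - {i, j}. (1 - ?z m) powr q)
                   = (\<Prod>m\<in>{..<k} - {i, j}. (1 - y m) powr q)"
    by (intro prod.cong) auto
  moreover have "(\<Sum>l\<in>{..<k} - {i, j}. odds_powr q (?z l))
                   = (\<Sum>l\<in>{..<k} - {i, j}. odds_powr q (y l))"
    by (intro sum.cong) auto
  ultimately show ?thesis
    using Pfun_split_pair[of k ?z i j q] assms(3-5) by simp
qed

lemma Pfun_max_stationary:
  fixes k :: nat and q :: real and y :: "nat \<Rightarrow> real"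
  defines "S \<equiv> \<Sum>l<k. odds_powr q (y l)"
  assumes "0 < q" "y \<in> prob_simplex k" "\<forall>m<k. 0 < y m \<and> y m < 1"
    and max: "\<forall>z\<in>prob_simplex k. Pfun k q z \<le> Pfun k q y"
    and "i < k" "j < k"
  shows "(odds_powr q (y i) / y i - S) / (1 - y i) = (odds_powr q (y j) / y j - S) / (1 - y j)"
proof (cases "i = j")
  case False
  define B where "B = (\<Prod>m\<in>{..<k} - {i, j}. (1 - y m) powr q)"
  define R where "R = (\<Sum>l\<in>{..<k} - {i, j}. odds_powr q (y l))"
  define g where "g t = (1 - (y i + t)) powr q * (1 - (y j - t)) powr q
                        * (odds_powr q (y i + t) + odds_powr q (y j - t) + R)" for t
  define d where "d = min (y i) (y j)"
  have "0 < d" "0 < B"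
    using assms(4,6,7) unfolding d_def B_def by (auto intro!: prod_pos)
  have Pfun_eq: "Pfun k q (y(i := y i + t, j := y j - t)) = B * g t" if "\<bar>t\<bar> < d" for t
    using Pfun_transfer[OF assms(3) _ assms(6,7) False, of t q] that assms(4)
    unfolding B_def R_def g_def d_def by simp
  have "\<forall>t. \<bar>t\<bar> < d \<longrightarrow> g t \<le> g 0"
  proof (intro allI impI)
    fix t assume "\<bar>t\<bar> < d"
    then have "y(i := y i + t, j := y j - t) \<in> prob_simplex k"
      using assms(3,6,7) False by (intro prob_simplex_transfer) (auto simp: d_def)
    then have "B * g t \<le> B * g 0"
      using max Pfun_eq[OF \<open>\<bar>t\<bar> < d\<close>] Pfun_eq[of 0] \<open>0 < d\<close> by fastforce
    then show "g t \<le> g 0"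
      using \<open>0 < B\<close> by simp
  qed
  moreover have "S = odds_powr q (y i) + odds_powr q (y j) + R"
    unfolding S_def R_def using assms(6,7) False by (simp add: sum.remove2)
  ultimately show ?thesis
    using mass_transfer_stationary[of q "y i" "y j" d R] assms(2,4,6,7) \<open>0 < d\<close>
    unfolding g_def by simp
qed simp

lemma deviation_proportional_imp_eq_weighted_mean:
  fixes k :: nat and y r :: "nat \<Rightarrow> real"
  assumes "\<forall>l<k. 0 < y l \<and> y l < 1" "(\<Sum>l<k. y l) = 1" "(\<Sum>l<k. y l * r l) = S"
    and "\<forall>i<k. \<forall>j<k. (r i - S) / (1 - y i) = (r j - S) / (1 - y j)"
  shows "\<forall>l<k. r l = S"
proof -
  have "0 < k"
    using assms(2) by (cases k) auto
  define c where "c = (r 0 - S) / (1 - y 0)"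
  have r_eq: "r l = S + c * (1 - y l)" if "l < k" for l
  proof -
    have "(r l - S) / (1 - y l) = c"
      using assms(4) that \<open>0 < k\<close> unfolding c_def by blast
    moreover have "1 - y l \<noteq> 0"
      using assms(1) that by auto
    ultimately show ?thesis
      by (simp add: field_simps)
  qed
  have "S = (\<Sum>l<k. y l * (S + c * (1 - y l)))"
    using r_eq assms(3) by simp
  also have "\<dots> = S * (\<Sum>l<k. y l) + c * (\<Sum>l<k. y l * (1 - y l))"
    by (simp add: distrib_left sum.distrib sum_distrib_left mult.commute mult.left_commute)
  finally have "c * (\<Sum>l<k. y l * (1 - y l)) = 0"
    using assms(2) by simp
  moreover have "(\<Sum>l<k. y l * (1 - y l)) > 0"
    using assms(1) \<open>0 < k\<close> by (intro sum_pos) auto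
  ultimately have "c = 0"
    by simp
  then show ?thesis
    using r_eq by simp
qed

lemma Pfun_max_psi_const:
  fixes k :: nat and q :: real and y :: "nat \<Rightarrow> real"
  defines "S \<equiv> \<Sum>l<k. odds_powr q (y l)"
  assumes "0 < q" "y \<in> prob_simplex k" "\<forall>m<k. 0 < y m \<and> y m < 1"
    and "\<forall>z\<in>prob_simplex k. Pfun k q z \<le> Pfun k q y"
  shows "\<forall>l<k. psi q (y l) = ln S"
proof -
  have "(\<Sum>l<k. y l) = 1"
    using assms(3) by (simp add: prob_simplex_def)
  moreover have "(\<Sum>l<k. y l * (odds_powr q (y l) / y l)) = S"
    unfolding S_def using assms(4) by (intro sum.cong) auto
  moreover have "\<forall>i<k. \<forall>j<k. (odds_powr q (y i) / y i - S) / (1 - y i)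
                             = (odds_powr q (y j) / y j - S) / (1 - y j)"
    using Pfun_max_stationary[OF assms(2-5)] unfolding S_def by blast
  ultimately have "\<forall>l<k. odds_powr q (y l) / y l = S"
    by (rule deviation_proportional_imp_eq_weighted_mean[OF assms(4)])
  show ?thesis
  proof (intro allI impI)
    fix l assume "l < k"
    then have "0 < y l" "y l < 1"
      using assms(4) by auto
    then have "exp (psi q (y l)) = odds_powr q (y l) / y l"
      by (simp add: odds_powr_eq_exp_psi)
    also have "\<dots> = S"
      using \<open>l < k\<close> \<open>\<forall>l<k. odds_powr q (y l) / y l = S\<close> by simp
    finally show "psi q (y l) = ln S"
      by auto
  qed
qed

theorem corollary4p3:
  fixes k :: nat and q :: real and ystar :: "nat \<Rightarrow> real"
  assumes "k \<ge> 2" and "1/2 < q" and "q < 1"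
    and "ystar \<in> prob_simplex k"
    and "\<forall>i<k. ystar i > 0"
    and "\<forall>y\<in>prob_simplex k. Pfun k q y \<le> Pfun k q ystar"
    and "\<exists>i<k. ystar i \<noteq> 1 / real k"
  shows "\<exists>a b. a < 1 - q \<and> 1 - q < b \<and> ystar ` {..<k} = {a, b}"
proof -
  have "0 < q"
    using assms(2) by simp
  have in_unit: "\<forall>m<k. 0 < ystar m \<and> ystar m < 1"
    using prob_simplex_pos_less_one[OF assms(4,1,5)] assms(5) by blast
  then have "ystar ` {..<k} \<subseteq> {0<..<1}"
    by auto
  moreover have "\<forall>u\<in>ystar ` {..<k}. \<forall>v\<in>ystar ` {..<k}. psi q u = psi q v"
    using Pfun_max_psi_const[OF \<open>0 < q\<close> assms(4) in_unit assms(6)] by auto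
  moreover obtain i j where "i < k" "j < k" "ystar j \<noteq> ystar i"
    using assms(7) prob_simplex_nonconstant[OF assms(4)] by blast
  ultimately show ?thesis
    using psi_level_set_eq_two_points[OF \<open>0 < q\<close> assms(3)] by blast
qed

end
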